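(* Let $l_1,u_1,l_2,u_2$ be non-negative integers and $(f(k))$, $(g(k))$ complex sequences such that the polynomial identity \[ \sum_{k=l_1}^{u_1}f(k)(1-t)^k=\sum_{k=l_2}^{u_2}g(k)t^k \] holds for all complex $t$. Let $r,s\in\mathbb{C}\setminus\mathbb{Z}^{-}$ with $s\neq0$ and $r-s\notin\mathbb{Z}^{-}$. Then \[ \sum_{k=l_1}^{u_1}f(k)\frac{1}{\binom{k+r}{s}}=\sum_{k=l_2}^{u_2}g(k)\frac{s}{r-s+1}\frac{1}{\binom{k+r}{r-s+1}}, \] and \[ \sum_{k=l_1}^{u_1}f(k)\frac{H_s-H_{k+r-s}}{\binom{k+r}{s}}=\sum_{k=l_2}^{u_2}g(k)\frac{r+1}{(r-s+1)^2}\frac{1}{\binom{k+r}{r-s+1}}+\sum_{k=l_2}^{u_2}g(k)\frac{s}{r-s+1}\frac{H_{k+s-1}-H_{r-s+1}}{\binom{k+r}{r-s+1}}. \]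
   Context: $\mathbb{Z}^{-}$ denotes the set of negative integers. For complex $z$ not a negative integer, $H_z=\psi(z+1)+\gamma$ ($\psi$ the digamma function, $\gamma$ Euler's constant). Binomial coefficients with complex entries: $\binom{x}{y}=\frac{\Gamma(x+1)}{\Gamma(y+1)\Gamma(x-y+1)}$. *)

theory Defs
  imports "HOL-Analysis.Analysis"
begin

definition neg_ints :: "complex set" where
  "neg_ints = {of_int n | n. n < 0}"

definition harm :: "complex \<Rightarrow> complex" where
  "harm z = Digamma (z + 1) + euler_mascheroni"

definition cbinom :: "complex \<Rightarrow> complex \<Rightarrow> complex" where
  "cbinom x y = Gamma (x + 1) / (Gamma (y + 1) * Gamma (x - y + 1))"

end

theory Submission
  imports Defs
begin

(* Substituting t := 1 - t and comparing coefficients, the polynomial identity says that f is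
   the binomial transform of g, so that sum f(k) phi(k) = sum g(k) (Delta^k phi)(0) for every
   sequence phi, with (Delta^k phi)(0) = sum_i (-1)^i C(k,i) phi(i).
   With a = r - s + 1 we have 1/binom(k + r, s) = s B(a + k, s), and the Beta recurrence
   B(a + 1, b) + B(a, b + 1) = B(a, b) makes the k-th difference equal to s B(a, s + k): this is
   the first identity.  The second one is its derivative in s: since a + b does not depend on s,
   d/ds [s B(a, s + k)] = B(a, b) + s B(a, b) (psi(b) - psi(a)) with b = s + k, and the second
   summand satisfies the same recurrence by psi(z + 1) = psi(z) + 1/z. *)

lemma sum_binomial_atMost_extend:
  fixes c :: "nat \<Rightarrow> 'a::comm_semiring_1"
  assumes "k \<le> N"
  shows "(\<Sum>i\<le>k. of_nat (k choose i) * c i) = (\<Sum>i\<le>N. of_nat (k choose i) * c i)"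
  by (rule sum.mono_neutral_left) (use assms in \<open>auto simp: binomial_eq_0\<close>)

lemma one_minus_power_eq_sum:
  fixes x :: "'a::comm_ring_1"
  shows "(1 - x) ^ k = (\<Sum>i\<le>k. of_nat (k choose i) * (-1) ^ i * x ^ i)"
proof -
  have "(1 - x) ^ k = (\<Sum>i\<le>k. of_nat (k choose i) * (-x) ^ i * 1 ^ (k - i))"
    using binomial_ring[of "-x" 1 k] by simp
  then show ?thesis
    by (simp add: power_minus[of x] mult.assoc)
qed

lemma sum_binomial_transform_swap:
  fixes G X :: "nat \<Rightarrow> 'a::comm_ring_1"
  shows "(\<Sum>k\<le>N. G k * (\<Sum>i\<le>k. of_nat (k choose i) * (-1) ^ i * X i))
       = (\<Sum>i\<le>N. (\<Sum>k\<le>N. G k * (of_nat (k choose i) * (-1) ^ i)) * X i)"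
proof -
  have "(\<Sum>k\<le>N. G k * (\<Sum>i\<le>k. of_nat (k choose i) * (-1) ^ i * X i))
      = (\<Sum>k\<le>N. G k * (\<Sum>i\<le>N. of_nat (k choose i) * ((-1) ^ i * X i)))"
  proof (intro sum.cong refl)
    fix k assume "k \<in> {..N}"
    then show "G k * (\<Sum>i\<le>k. of_nat (k choose i) * (-1) ^ i * X i)
        = G k * (\<Sum>i\<le>N. of_nat (k choose i) * ((-1) ^ i * X i))"
      using sum_binomial_atMost_extend[of k N "\<lambda>i. (-1) ^ i * X i"] by (simp add: mult.assoc)
  qed
  also have "\<dots> = (\<Sum>i\<le>N. (\<Sum>k\<le>N. G k * (of_nat (k choose i) * (-1) ^ i)) * X i)"
    unfolding sum_distrib_left sum_distrib_right
    by (subst sum.swap) (simp add: mult_ac)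
  finally show ?thesis .
qed

lemma sum_eq_binomial_transform_if_polyfun_eq:
  fixes f g c :: "nat \<Rightarrow> 'a::{idom,real_normed_div_algebra}"
  assumes "finite A" "finite B"
    and poly: "\<And>t. (\<Sum>k\<in>A. f k * (1 - t) ^ k) = (\<Sum>k\<in>B. g k * t ^ k)"
  shows "(\<Sum>k\<in>A. f k * c k) = (\<Sum>k\<in>B. g k * (\<Sum>i\<le>k. of_nat (k choose i) * (-1) ^ i * c i))"
proof -
  obtain N where "A \<union> B \<subseteq> {..N}"
    using assms(1,2) finite_nat_iff_bounded_le by blast
  then have AN: "A \<subseteq> {..N}" and BN: "B \<subseteq> {..N}" by auto
  define F where "F k = (if k \<in> A then f k else 0)" for k
  define G where "G k = (if k \<in> B then g k else 0)" for k
  define H where "H i = (\<Sum>k\<le>N. G k * (of_nat (k choose i) * (-1) ^ i))" for i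
  have F_sum: "(\<Sum>k\<in>A. f k * X k) = (\<Sum>k\<le>N. F k * X k)" for X :: "nat \<Rightarrow> 'a"
    by (rule sum.mono_neutral_cong_left) (use AN in \<open>auto simp: F_def\<close>)
  have G_sum: "(\<Sum>k\<in>B. g k * X k) = (\<Sum>k\<le>N. G k * X k)" for X :: "nat \<Rightarrow> 'a"
    by (rule sum.mono_neutral_cong_left) (use BN in \<open>auto simp: G_def\<close>)
  have H_sum: "(\<Sum>k\<le>N. G k * (\<Sum>i\<le>k. of_nat (k choose i) * (-1) ^ i * X i)) = (\<Sum>i\<le>N. H i * X i)"
    for X :: "nat \<Rightarrow> 'a"
    unfolding H_def by (rule sum_binomial_transform_swap)
  have "(\<Sum>k\<le>N. F k * x ^ k) = (\<Sum>i\<le>N. H i * x ^ i)" for x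
  proof -
    have "(\<Sum>k\<le>N. F k * x ^ k) = (\<Sum>k\<in>A. f k * (1 - (1 - x)) ^ k)"
      by (simp add: F_sum)
    also have "\<dots> = (\<Sum>k\<le>N. G k * (1 - x) ^ k)"
      by (simp only: poly G_sum)
    also have "\<dots> = (\<Sum>i\<le>N. H i * x ^ i)"
      by (simp only: one_minus_power_eq_sum H_sum)
    finally show ?thesis .
  qed
  then have FH: "F i = H i" if "i \<le> N" for i
    using polyfun_eq_coeffs that by blast
  have "(\<Sum>k\<in>A. f k * c k) = (\<Sum>i\<le>N. H i * c i)"
    by (simp add: F_sum FH)
  also have "\<dots> = (\<Sum>k\<in>B. g k * (\<Sum>i\<le>k. of_nat (k choose i) * (-1) ^ i * c i))"
    by (simp only: H_sum G_sum)
  finally show ?thesis .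
qed

lemma sum_Suc_choose_split:
  fixes a :: "nat \<Rightarrow> 'a::comm_semiring_1"
  shows "(\<Sum>i\<le>Suc j. of_nat (Suc j choose i) * a i)
       = (\<Sum>i\<le>j. of_nat (j choose i) * a i) + (\<Sum>i\<le>j. of_nat (j choose i) * a (Suc i))"
proof -
  have "(\<Sum>i\<le>Suc j. of_nat (Suc j choose i) * a i)
      = a 0 + (\<Sum>i\<le>j. of_nat (j choose Suc i) * a (Suc i)) + (\<Sum>i\<le>j. of_nat (j choose i) * a (Suc i))"
    by (subst sum.atMost_Suc_shift) (simp add: sum.distrib algebra_simps)
  also have "a 0 + (\<Sum>i\<le>j. of_nat (j choose Suc i) * a (Suc i)) = (\<Sum>i\<le>Suc j. of_nat (j choose i) * a i)"
    by (simp only: sum.atMost_Suc_shift) simp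
  also have "\<dots> = (\<Sum>i\<le>j. of_nat (j choose i) * a i)"
    by (simp add: binomial_eq_0)
  finally show ?thesis .
qed

lemma sum_alternating_binomial_eq_iterated_difference:
  fixes D :: "nat \<Rightarrow> nat \<Rightarrow> 'a::comm_ring_1"
  assumes "\<And>j m. D (Suc j) m = D j m - D j (Suc m)"
  shows "(\<Sum>i\<le>j. of_nat (j choose i) * (-1) ^ i * D 0 (i + m)) = D j m"
proof (induction j arbitrary: m)
  case 0
  then show ?case by simp
next
  case (Suc j)
  have "(\<Sum>i\<le>Suc j. of_nat (Suc j choose i) * ((-1) ^ i * D 0 (i + m)))
      = (\<Sum>i\<le>j. of_nat (j choose i) * ((-1) ^ i * D 0 (i + m)))
        - (\<Sum>i\<le>j. of_nat (j choose i) * ((-1) ^ i * D 0 (i + Suc m)))"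
    unfolding sum_Suc_choose_split by (simp add: sum_negf)
  also have "\<dots> = D j m - D j (Suc m)"
    using Suc.IH[of m] Suc.IH[of "Suc m"] by (simp add: mult.assoc)
  finally show ?case
    by (simp add: assms mult.assoc)
qed

lemma plus_of_nat_notin_nonpos_Ints:
  fixes z :: "'a::ring_1"
  assumes "z \<notin> \<int>\<^sub>\<le>\<^sub>0"
  shows "z + of_nat n \<notin> \<int>\<^sub>\<le>\<^sub>0"
proof
  assume "z + of_nat n \<in> \<int>\<^sub>\<le>\<^sub>0"
  then have "z + of_nat n - of_nat n \<in> \<int>\<^sub>\<le>\<^sub>0"
    by (rule nonpos_Ints_diff_Nats) simp
  with assms show False by simp
qed

lemma sum_alternating_binomial_if_Pascal_recurrence:
  fixes h :: "'a::comm_ring_1 \<Rightarrow> 'a \<Rightarrow> 'a"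
  assumes rec: "\<And>a b. a \<notin> \<int>\<^sub>\<le>\<^sub>0 \<Longrightarrow> b \<notin> \<int>\<^sub>\<le>\<^sub>0 \<Longrightarrow> h (a + 1) b + h a (b + 1) = h a b"
    and a: "a \<notin> \<int>\<^sub>\<le>\<^sub>0" and b: "b \<notin> \<int>\<^sub>\<le>\<^sub>0"
  shows "(\<Sum>i\<le>j. of_nat (j choose i) * (-1) ^ i * h (a + of_nat i) b) = h a (b + of_nat j)"
proof -
  define D where "D j m = h (a + of_nat m) (b + of_nat j)" for j m
  have "D (Suc j) m = D j m - D j (Suc m)" for j m
    using rec[OF plus_of_nat_notin_nonpos_Ints[OF a] plus_of_nat_notin_nonpos_Ints[OF b], of m j]
    by (simp add: D_def algebra_simps)
  from sum_alternating_binomial_eq_iterated_difference[of D, OF this, of j 0]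
  show ?thesis by (simp add: D_def)
qed

lemma Beta_plus1_right_div_eq_Beta_plus1_left_div:
  fixes a b :: "'a::Gamma"
  assumes a: "a \<notin> \<int>\<^sub>\<le>\<^sub>0" and b: "b \<notin> \<int>\<^sub>\<le>\<^sub>0"
  shows "Beta a (b + 1) / b = Beta (a + 1) b / a"
proof -
  have "a \<noteq> 0" "b \<noteq> 0" using a b by auto
  then show ?thesis
    unfolding Beta_altdef Gamma_plus1[OF a] Gamma_plus1[OF b] by (simp add: ac_simps)
qed

text \<open>The derivative of \<open>t \<mapsto> Beta (a - t) (b + t)\<close> at \<open>t = 0\<close>.\<close>
definition Beta_deriv :: "'a::Gamma \<Rightarrow> 'a \<Rightarrow> 'a" where
  "Beta_deriv a b = Beta a b * (Digamma b - Digamma a)"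

lemma Beta_deriv_commute: "Beta_deriv b a = - Beta_deriv a b"
  by (simp add: Beta_deriv_def Beta_commute algebra_simps)

lemma Beta_deriv_plus1_plus1:
  fixes a b :: "'a::Gamma"
  assumes a: "a \<notin> \<int>\<^sub>\<le>\<^sub>0" and b: "b \<notin> \<int>\<^sub>\<le>\<^sub>0"
  shows "Beta_deriv (a + 1) b + Beta_deriv a (b + 1) = Beta_deriv a b"
proof -
  have "a \<noteq> 0" "b \<noteq> 0" using a b by auto
  then have "Beta_deriv (a + 1) b + Beta_deriv a (b + 1)
      = (Beta (a + 1) b + Beta a (b + 1)) * (Digamma b - Digamma a)
        + (Beta a (b + 1) / b - Beta (a + 1) b / a)"
    unfolding Beta_deriv_def Digamma_plus1[OF \<open>a \<noteq> 0\<close>] Digamma_plus1[OF \<open>b \<noteq> 0\<close>]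
    by (simp add: algebra_simps)
  also have "\<dots> = Beta_deriv a b"
    by (simp add: Beta_plus1_plus1 Beta_plus1_right_div_eq_Beta_plus1_left_div a b Beta_deriv_def)
  finally show ?thesis .
qed

lemma inverse_cbinom_eq_Beta:
  assumes "y \<notin> \<int>\<^sub>\<le>\<^sub>0"
  shows "1 / cbinom x y = y * Beta (x - y + 1) y"
  unfolding cbinom_def Beta_def Gamma_plus1[OF assms] by (simp add: ac_simps)

lemma harm_diff_div_cbinom_eq_Beta:
  assumes "y \<notin> \<int>\<^sub>\<le>\<^sub>0"
  shows "(harm y - harm (x - y)) / cbinom x y = Beta (x - y + 1) y + y * Beta_deriv (x - y + 1) y"
proof -
  have "y \<noteq> 0" using assms by auto
  have "(harm y - harm (x - y)) / cbinom x y = (harm y - harm (x - y)) * (1 / cbinom x y)"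
    by simp
  also have "\<dots> = (1 / y + (Digamma y - Digamma (x - y + 1))) * (y * Beta (x - y + 1) y)"
    unfolding inverse_cbinom_eq_Beta[OF assms] harm_def Digamma_plus1[OF \<open>y \<noteq> 0\<close>] by simp
  also have "\<dots> = Beta (x - y + 1) y + y * Beta_deriv (x - y + 1) y"
    using \<open>y \<noteq> 0\<close> by (simp add: Beta_deriv_def field_simps)
  finally show ?thesis .
qed

lemma sum_alternating_inverse_cbinom:
  fixes r s :: complex
  assumes s: "s \<notin> \<int>\<^sub>\<le>\<^sub>0" and rs: "r - s + 1 \<notin> \<int>\<^sub>\<le>\<^sub>0"
  shows "(\<Sum>i\<le>k. of_nat (k choose i) * (-1) ^ i * (1 / cbinom (of_nat i + r) s))
       = s * Beta (r - s + 1) (s + of_nat k)"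
proof -
  have shift: "of_nat i + r - s + 1 = r - s + 1 + of_nat i" for i :: nat
    by simp
  show ?thesis
    unfolding inverse_cbinom_eq_Beta[OF s] shift
    by (intro sum_alternating_binomial_if_Pascal_recurrence[OF _ rs s])
       (simp add: Beta_plus1_plus1 flip: distrib_left)
qed

lemma sum_alternating_harm_diff_div_cbinom:
  fixes r s :: complex
  assumes s: "s \<notin> \<int>\<^sub>\<le>\<^sub>0" and rs: "r - s + 1 \<notin> \<int>\<^sub>\<le>\<^sub>0"
  shows "(\<Sum>i\<le>k. of_nat (k choose i) * (-1) ^ i *
            ((harm s - harm (of_nat i + r - s)) / cbinom (of_nat i + r) s))
       = Beta (r - s + 1) (s + of_nat k) + s * Beta_deriv (r - s + 1) (s + of_nat k)"
proof -
  have shift: "of_nat i + r - s + 1 = r - s + 1 + of_nat i" for i :: nat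
    by simp
  show ?thesis
    unfolding harm_diff_div_cbinom_eq_Beta[OF s] shift
  proof (rule sum_alternating_binomial_if_Pascal_recurrence[OF _ rs s])
    fix a b :: complex
    assume a: "a \<notin> \<int>\<^sub>\<le>\<^sub>0" and b: "b \<notin> \<int>\<^sub>\<le>\<^sub>0"
    have "Beta (a + 1) b + s * Beta_deriv (a + 1) b + (Beta a (b + 1) + s * Beta_deriv a (b + 1))
        = (Beta (a + 1) b + Beta a (b + 1)) + s * (Beta_deriv (a + 1) b + Beta_deriv a (b + 1))"
      by (simp add: algebra_simps)
    also have "\<dots> = Beta a b + s * Beta_deriv a b"
      by (simp only: Beta_plus1_plus1[OF a b] Beta_deriv_plus1_plus1[OF a b])
    finally show "Beta (a + 1) b + s * Beta_deriv (a + 1) b + (Beta a (b + 1) + s * Beta_deriv a (b + 1))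
        = Beta a b + s * Beta_deriv a b" .
  qed
qed

lemma inverse_cbinom_shift_eq_Beta:
  fixes r s x :: complex
  assumes rs: "r - s + 1 \<notin> \<int>\<^sub>\<le>\<^sub>0"
  shows "1 / cbinom (x + r) (r - s + 1) = (r - s + 1) * Beta (r - s + 1) (s + x)"
proof -
  have shift: "x + r - (r - s + 1) + 1 = s + x"
    by simp
  show ?thesis
    using inverse_cbinom_eq_Beta[OF rs, of "x + r"] unfolding shift Beta_commute[of "s + x"] .
qed

lemma harm_diff_div_cbinom_shift_eq_Beta_deriv:
  fixes r s x :: complex
  assumes rs: "r - s + 1 \<notin> \<int>\<^sub>\<le>\<^sub>0"
  shows "(harm (x + s - 1) - harm (r - s + 1)) / cbinom (x + r) (r - s + 1)
       = (r - s + 1) * Beta_deriv (r - s + 1) (s + x) - Beta (r - s + 1) (s + x)"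
proof -
  have shift: "x + r - (r - s + 1) + 1 = s + x" "x + s - 1 = x + r - (r - s + 1)"
    by simp_all
  have "(harm (r - s + 1) - harm (x + r - (r - s + 1))) / cbinom (x + r) (r - s + 1)
      = Beta (r - s + 1) (s + x) - (r - s + 1) * Beta_deriv (r - s + 1) (s + x)"
    using harm_diff_div_cbinom_eq_Beta[OF rs, of "x + r"]
    unfolding shift(1) Beta_commute[of "s + x"] Beta_deriv_commute[of "s + x"] by simp
  then show ?thesis
    unfolding shift(2) by (metis minus_diff_eq minus_divide_left)
qed

lemma scaled_inverse_cbinom_shift_eq_Beta:
  fixes r s x :: complex
  assumes rs: "r - s + 1 \<notin> \<int>\<^sub>\<le>\<^sub>0"
  shows "s / (r - s + 1) * (1 / cbinom (x + r) (r - s + 1)) = s * Beta (r - s + 1) (s + x)"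
proof -
  from rs have "r - s + 1 \<noteq> 0"
    by auto
  then show ?thesis
    by (simp add: inverse_cbinom_shift_eq_Beta[OF rs])
qed

lemma harm_combination_div_cbinom_shift_eq_Beta:
  fixes r s x :: complex
  assumes rs: "r - s + 1 \<notin> \<int>\<^sub>\<le>\<^sub>0"
  shows "(r + 1) / (r - s + 1)^2 * (1 / cbinom (x + r) (r - s + 1))
         + s / (r - s + 1) * ((harm (x + s - 1) - harm (r - s + 1)) / cbinom (x + r) (r - s + 1))
       = Beta (r - s + 1) (s + x) + s * Beta_deriv (r - s + 1) (s + x)"
proof -
  have combine: "(a + s) / a^2 * (a * B) + s / a * (a * D - B) = B + s * D"
    if "a \<noteq> 0" for a B D :: complex
    using that by (simp add: field_simps power2_eq_square)
  have r_plus1: "r + 1 = (r - s + 1) + s"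
    by simp
  from rs have "r - s + 1 \<noteq> 0"
    by auto
  then show ?thesis
    unfolding inverse_cbinom_shift_eq_Beta[OF rs] harm_diff_div_cbinom_shift_eq_Beta_deriv[OF rs]
    by (subst r_plus1) (rule combine)
qed

lemma neg_ints_iff_plus1_in_nonpos_Ints: "z \<in> neg_ints \<longleftrightarrow> z + 1 \<in> \<int>\<^sub>\<le>\<^sub>0"
proof
  assume "z \<in> neg_ints"
  then obtain n where "z = of_int n" "n < 0" unfolding neg_ints_def by blast
  then have "z + 1 = of_int (n + 1)" "n + 1 \<le> 0" by simp_all
  then show "z + 1 \<in> \<int>\<^sub>\<le>\<^sub>0" using nonpos_Ints_of_int by metis
next
  assume "z + 1 \<in> \<int>\<^sub>\<le>\<^sub>0"
  then obtain n where "z + 1 = of_int n" "n \<le> 0" by (auto elim: nonpos_Ints_cases)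
  then have "z = of_int (n - 1)" "n - 1 < 0" by (simp_all add: algebra_simps)
  then show "z \<in> neg_ints" unfolding neg_ints_def by blast
qed

lemma notin_nonpos_Ints_if_notin_neg_ints:
  assumes "z \<notin> neg_ints" "z \<noteq> 0"
  shows "z \<notin> \<int>\<^sub>\<le>\<^sub>0"
proof
  assume "z \<in> \<int>\<^sub>\<le>\<^sub>0"
  then obtain n where "z = of_int n" "n \<le> 0" by (auto elim: nonpos_Ints_cases)
  with assms have "z = of_int n" "n < 0" by auto
  with assms(1) show False unfolding neg_ints_def by blast
qed

theorem lemma5:
  fixes l1 u1 l2 u2 :: nat and f g :: "nat \<Rightarrow> complex" and r s :: complex
  assumes poly: "\<forall>t::complex. (\<Sum>k=l1..u1. f k * (1 - t) ^ k) = (\<Sum>k=l2..u2. g k * t ^ k)"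
    and r: "r \<notin> neg_ints" and s: "s \<notin> neg_ints" and s0: "s \<noteq> 0"
    and rs: "r - s \<notin> neg_ints"
  shows "((\<Sum>k=l1..u1. f k * (1 / cbinom (of_nat k + r) s))
           = (\<Sum>k=l2..u2. g k * (s / (r - s + 1)) * (1 / cbinom (of_nat k + r) (r - s + 1)))) \<and>
         ((\<Sum>k=l1..u1. f k * ((harm s - harm (of_nat k + r - s)) / cbinom (of_nat k + r) s))
           = (\<Sum>k=l2..u2. g k * ((r + 1) / (r - s + 1)^2) * (1 / cbinom (of_nat k + r) (r - s + 1)))
             + (\<Sum>k=l2..u2. g k * (s / (r - s + 1)) *
                  ((harm (of_nat k + s - 1) - harm (r - s + 1)) / cbinom (of_nat k + r) (r - s + 1))))"
proof -
  \<comment> \<open>\<open>r\<close> is not needed: at the poles of \<open>Gamma (of_nat k + r + 1)\<close> Isabelle's \<open>Gamma\<close> is \<open>0\<close>,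
    so \<open>1 / cbinom (of_nat k + r) s\<close> and the corresponding Beta value are both the junk value \<open>0\<close>.\<close>
  have s_ok: "s \<notin> \<int>\<^sub>\<le>\<^sub>0"
    using s s0 by (rule notin_nonpos_Ints_if_notin_neg_ints)
  have rs_ok: "r - s + 1 \<notin> \<int>\<^sub>\<le>\<^sub>0"
    using rs by (simp add: neg_ints_iff_plus1_in_nonpos_Ints)
  show ?thesis
    unfolding sum_eq_binomial_transform_if_polyfun_eq[OF finite_atLeastAtMost finite_atLeastAtMost poly[rule_format]]
      sum_alternating_inverse_cbinom[OF s_ok rs_ok] sum_alternating_harm_diff_div_cbinom[OF s_ok rs_ok]
      sum.distrib[symmetric]
    by (simp only: mult.assoc scaled_inverse_cbinom_shift_eq_Beta[OF rs_ok] distrib_left[symmetric]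
        harm_combination_div_cbinom_shift_eq_Beta[OF rs_ok])
qed

end
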